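(* There exist a sequence of Pauli Hamiltonians $H_n=\sum_ic_i^{(n)}P_i^{(n)}$ and states $|\psi_n\rangle$ such that $$\frac{D_n(\psi_n)}{\mathrm{Var}(H_n)|_{\psi_n}}\longrightarrow0\quad(n\to\infty),$$ where $D_n(\psi)=\sum_i(c_i^{(n)})^2\,(1-\langle\psi|P_i^{(n)}|\psi\rangle^2)$ and $\mathrm{Var}(H_n)|_\psi=\langle\psi|H_n^2|\psi\rangle-\langle\psi|H_n|\psi\rangle^2$.
   Context: A Pauli Hamiltonian is $H=\sum_ic_iP_i$ with real coefficients and distinct $n$-qubit Pauli strings $P_i\in\{I,X,Y,Z\}^{\otimes n}$. *)

theory Defs
  imports Complex_Main
begin

datatype pauli = PI | PX | PY | PZ

text \<open>Single-qubit Pauli matrices; entry (row b', column b), with the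
computational basis |0> = False, |1> = True.\<close>
fun pauli_mat :: "pauli \<Rightarrow> bool \<Rightarrow> bool \<Rightarrow> complex" where
  "pauli_mat PI r c = (if r = c then 1 else 0)"
| "pauli_mat PX r c = (if r \<noteq> c then 1 else 0)"
| "pauli_mat PY r c = (if r = c then 0 else if r then \<i> else - \<i>)"
| "pauli_mat PZ r c = (if r = c then (if c then -1 else 1) else 0)"

definition bitstrings :: "nat \<Rightarrow> bool list set" where
  "bitstrings n = {xs. length xs = n}"

definition pauli_strings :: "nat \<Rightarrow> pauli list set" where
  "pauli_strings n = {ps. length ps = n}"

text \<open>Matrix entries of the tensor product P_1 \<otimes> ... \<otimes> P_n.\<close>
definition pstring_mat :: "pauli list \<Rightarrow> bool list \<Rightarrow> bool list \<Rightarrow> complex" where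
  "pstring_mat ps r c = (\<Prod>k<length ps. pauli_mat (ps ! k) (r ! k) (c ! k))"

text \<open>Pauli Hamiltonian H = sum over n-qubit Pauli strings P of c(P) P
  (distinct strings; absent strings have coefficient 0).\<close>
definition ham_mat :: "nat \<Rightarrow> (pauli list \<Rightarrow> real) \<Rightarrow> bool list \<Rightarrow> bool list \<Rightarrow> complex" where
  "ham_mat n c r s = (\<Sum>P\<in>pauli_strings n. complex_of_real (c P) * pstring_mat P r s)"

definition mat_mult :: "nat \<Rightarrow> (bool list \<Rightarrow> bool list \<Rightarrow> complex) \<Rightarrow> (bool list \<Rightarrow> bool list \<Rightarrow> complex)
    \<Rightarrow> bool list \<Rightarrow> bool list \<Rightarrow> complex" where
  "mat_mult n A B r s = (\<Sum>z\<in>bitstrings n. A r z * B z s)"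

definition expect :: "nat \<Rightarrow> (bool list \<Rightarrow> complex) \<Rightarrow> (bool list \<Rightarrow> bool list \<Rightarrow> complex) \<Rightarrow> complex" where
  "expect n \<psi> A = (\<Sum>r\<in>bitstrings n. \<Sum>s\<in>bitstrings n. cnj (\<psi> r) * A r s * \<psi> s)"

definition is_state :: "nat \<Rightarrow> (bool list \<Rightarrow> complex) \<Rightarrow> bool" where
  "is_state n \<psi> \<longleftrightarrow> (\<Sum>r\<in>bitstrings n. (cmod (\<psi> r))\<^sup>2) = 1"

text \<open>Var(H)|_psi = <psi|H^2|psi> - <psi|H|psi>^2 (real since H is Hermitian).\<close>
definition variance :: "nat \<Rightarrow> (pauli list \<Rightarrow> real) \<Rightarrow> (bool list \<Rightarrow> complex) \<Rightarrow> real" where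
  "variance n c \<psi> = Re (expect n \<psi> (mat_mult n (ham_mat n c) (ham_mat n c)))
                      - (Re (expect n \<psi> (ham_mat n c)))\<^sup>2"

definition Dquant :: "nat \<Rightarrow> (pauli list \<Rightarrow> real) \<Rightarrow> (bool list \<Rightarrow> complex) \<Rightarrow> real" where
  "Dquant n c \<psi> = (\<Sum>P\<in>pauli_strings n. (c P)\<^sup>2 * (1 - (Re (expect n \<psi> (pstring_mat P)))\<^sup>2))"

end

theory Submission
  imports Defs
begin

(* D weighs the fluctuation of each Pauli term separately, while Var(H) also sees the covariances
   between the terms. On m + 1 qubits let H be the sum, with unit coefficients, of the 2^m
   Z-type strings with Z on the first qubit, and let psi = |+> (x) |0...0>. Every term has
   expectation 0 in psi, so D = 2^m. But all terms are diagonal and perfectly correlated on the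
   support of psi (each is +1 on |00...0> and -1 on |10...0>), so H takes the values 2^m and -2^m
   there and Var(H) = 4^m. Hence D / Var(H) = 2^-m. *)

lemma finite_bitstrings: "finite (bitstrings n)"
  unfolding bitstrings_def using finite_lists_length_eq[of "UNIV :: bool set" n] by simp

lemma finite_pauli_strings: "finite (pauli_strings n)"
proof -
  have "pauli_strings n = {ps. set ps \<subseteq> {PI, PX, PY, PZ} \<and> length ps = n}"
    by (auto simp: pauli_strings_def) (metis pauli.exhaust)
  then show ?thesis using finite_lists_length_eq[of "{PI, PX, PY, PZ}" n] by simp
qed

definition diagonal_on :: "nat \<Rightarrow> (bool list \<Rightarrow> bool list \<Rightarrow> complex) \<Rightarrow> bool" where
  "diagonal_on n A \<longleftrightarrow> (\<forall>r\<in>bitstrings n. \<forall>s\<in>bitstrings n. r \<noteq> s \<longrightarrow> A r s = 0)"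

lemma expect_diagonal:
  assumes "diagonal_on n A"
  shows "expect n \<psi> A = (\<Sum>r\<in>bitstrings n. of_real ((cmod (\<psi> r))\<^sup>2) * A r r)"
  unfolding expect_def
proof (intro sum.cong refl)
  fix r assume r: "r \<in> bitstrings n"
  have "(\<Sum>s\<in>bitstrings n. cnj (\<psi> r) * A r s * \<psi> s)
      = (\<Sum>s\<in>bitstrings n. if s = r then cnj (\<psi> r) * A r r * \<psi> r else 0)"
    using assms r unfolding diagonal_on_def by (intro sum.cong) auto
  also have "\<dots> = cnj (\<psi> r) * A r r * \<psi> r"
    using r finite_bitstrings by simp
  also have "\<dots> = of_real ((cmod (\<psi> r))\<^sup>2) * A r r"
    by (simp only: complex_norm_square) (simp add: mult_ac)
  finally show "(\<Sum>s\<in>bitstrings n. cnj (\<psi> r) * A r s * \<psi> s)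
      = of_real ((cmod (\<psi> r))\<^sup>2) * A r r" .
qed

lemma mat_mult_diagonal:
  assumes "diagonal_on n A" "diagonal_on n B" "r \<in> bitstrings n" "s \<in> bitstrings n"
  shows "mat_mult n A B r s = (if r = s then A r r * B r r else 0)"
proof -
  have "mat_mult n A B r s = (\<Sum>z\<in>bitstrings n. if z = r then A r r * B r s else 0)"
    using assms(1,3) unfolding mat_mult_def diagonal_on_def by (intro sum.cong) auto
  then show ?thesis
    using assms finite_bitstrings unfolding diagonal_on_def by auto
qed

lemma diagonal_on_mat_mult:
  "diagonal_on n A \<Longrightarrow> diagonal_on n B \<Longrightarrow> diagonal_on n (mat_mult n A B)"
  by (simp add: diagonal_on_def mat_mult_diagonal)

lemma pauli_mat_offdiag_Z: "p \<in> {PI, PZ} \<Longrightarrow> x \<noteq> y \<Longrightarrow> pauli_mat p x y = 0"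
  by auto

lemma pstring_mat_offdiag_Z:
  assumes "set P \<subseteq> {PI, PZ}" "length r = length P" "length s = length P" "r \<noteq> s"
  shows "pstring_mat P r s = 0"
proof -
  obtain k where k: "k < length P" "r ! k \<noteq> s ! k"
    using assms nth_equalityI[of r s] by auto
  have "P ! k \<in> {PI, PZ}"
    using assms(1) k(1) nth_mem by blast
  then have "pauli_mat (P ! k) (r ! k) (s ! k) = 0"
    using k(2) by (rule pauli_mat_offdiag_Z)
  then show ?thesis
    unfolding pstring_mat_def using k(1) by (intro prod_zero) auto
qed

lemma diagonal_on_pstring_mat_Z:
  "set P \<subseteq> {PI, PZ} \<Longrightarrow> length P = n \<Longrightarrow> diagonal_on n (pstring_mat P)"
  by (simp add: diagonal_on_def bitstrings_def pstring_mat_offdiag_Z)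

lemma diagonal_on_ham_mat_Z:
  assumes "\<And>P. c P \<noteq> 0 \<Longrightarrow> set P \<subseteq> {PI, PZ}"
  shows "diagonal_on n (ham_mat n c)"
  unfolding diagonal_on_def ham_mat_def
  using assms pstring_mat_offdiag_Z
  by (force simp: bitstrings_def pauli_strings_def intro!: sum.neutral)

definition two_point_state :: "bool list \<Rightarrow> bool list \<Rightarrow> bool list \<Rightarrow> complex" where
  "two_point_state a b r = (if r = a \<or> r = b then of_real (1 / sqrt 2) else 0)"

lemma sum_two_point_state:
  fixes f :: "bool list \<Rightarrow> 'a :: real_field"
  assumes "finite A" "a \<in> A" "b \<in> A" "a \<noteq> b"
  shows "(\<Sum>r\<in>A. of_real ((cmod (two_point_state a b r))\<^sup>2) * f r) = (f a + f b) / 2"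
proof -
  have amplitude: "(cmod (two_point_state a b r))\<^sup>2 = (if r = a \<or> r = b then 1 / 2 else 0)" for r
    by (simp add: two_point_state_def norm_divide power_divide)
  have "(\<Sum>r\<in>A. of_real ((cmod (two_point_state a b r))\<^sup>2) * f r) = (\<Sum>r\<in>{a, b}. f r / 2)"
    unfolding amplitude using assms by (intro sum.mono_neutral_cong_right) auto
  then show ?thesis using assms(4) by (simp add: add_divide_distrib)
qed

lemma is_state_two_point_state:
  assumes "a \<in> bitstrings n" "b \<in> bitstrings n" "a \<noteq> b"
  shows "is_state n (two_point_state a b)"
  using sum_two_point_state[OF finite_bitstrings assms, of "\<lambda>_. 1 :: real"]
  by (simp add: is_state_def)

lemma expect_diagonal_two_point_state:
  assumes "diagonal_on n A" "a \<in> bitstrings n" "b \<in> bitstrings n" "a \<noteq> b"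
  shows "expect n (two_point_state a b) A = (A a a + A b b) / 2"
  using sum_two_point_state[OF finite_bitstrings assms(2-4)]
  by (simp add: expect_diagonal[OF assms(1)])

lemma variance_diagonal_two_point_state:
  assumes "diagonal_on n (ham_mat n c)"
    and "a \<in> bitstrings n" "b \<in> bitstrings n" "a \<noteq> b"
    and "ham_mat n c a a = of_real x" "ham_mat n c b b = of_real y"
  shows "variance n c (two_point_state a b) = ((x - y) / 2)\<^sup>2"
proof -
  let ?H = "ham_mat n c"
  have mean: "expect n (two_point_state a b) ?H = of_real ((x + y) / 2)"
    using assms by (simp add: expect_diagonal_two_point_state)
  have second_moment:
    "expect n (two_point_state a b) (mat_mult n ?H ?H) = of_real ((x\<^sup>2 + y\<^sup>2) / 2)"
    using assms by (simp add: expect_diagonal_two_point_state diagonal_on_mat_mult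
        mat_mult_diagonal power2_eq_square)
  show ?thesis
    unfolding variance_def mean second_moment by (simp add: power2_eq_square field_simps)
qed

lemma ham_mat_of_bool:
  assumes "S \<subseteq> pauli_strings n"
  shows "ham_mat n (\<lambda>P. of_bool (P \<in> S)) r s = (\<Sum>P\<in>S. pstring_mat P r s)"
  unfolding ham_mat_def using assms finite_pauli_strings
  by (intro sum.mono_neutral_cong_right) auto

lemma Dquant_of_bool:
  assumes "S \<subseteq> pauli_strings n"
  shows "Dquant n (\<lambda>P. of_bool (P \<in> S)) \<psi>
    = (\<Sum>P\<in>S. 1 - (Re (expect n \<psi> (pstring_mat P)))\<^sup>2)"
  unfolding Dquant_def using assms finite_pauli_strings
  by (intro sum.mono_neutral_cong_right) auto

definition z_strings :: "nat \<Rightarrow> pauli list set" where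
  "z_strings n = {ps. set ps \<subseteq> {PI, PZ} \<and> length ps = n}"

lemma card_z_strings: "card (z_strings n) = 2 ^ n"
  unfolding z_strings_def by (simp add: card_lists_length_eq numeral_2_eq_2)

lemma pstring_mat_zeros:
  "set P \<subseteq> {PI, PZ} \<Longrightarrow>
    pstring_mat P (replicate (length P) False) (replicate (length P) False) = 1"
  unfolding pstring_mat_def by (intro prod.neutral) (auto dest!: nth_mem)

lemma pstring_mat_Z_one_zeros:
  assumes "set P \<subseteq> {PI, PZ}"
  shows "pstring_mat (PZ # P) (True # replicate (length P) False)
    (True # replicate (length P) False) = -1"
  using pstring_mat_zeros[OF assms]
  by (simp add: pstring_mat_def prod.lessThan_Suc_shift del: prod.lessThan_Suc)

lemma z_leading_strings_subset: "Cons PZ ` z_strings m \<subseteq> pauli_strings (Suc m)"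
  by (auto simp: z_strings_def pauli_strings_def)

lemma card_z_leading_strings: "card (Cons PZ ` z_strings m) = 2 ^ m"
  by (simp add: card_image card_z_strings)

definition plus_zeros :: "nat \<Rightarrow> bool list \<Rightarrow> complex" where
  "plus_zeros m = two_point_state (False # replicate m False) (True # replicate m False)"

lemma plus_zeros_support:
  "False # replicate m False \<in> bitstrings (Suc m)" "True # replicate m False \<in> bitstrings (Suc m)"
  by (simp_all add: bitstrings_def)

lemma is_state_plus_zeros: "is_state (Suc m) (plus_zeros m)"
  unfolding plus_zeros_def by (rule is_state_two_point_state) (simp_all add: plus_zeros_support)

lemma expect_plus_zeros_z_leading:
  assumes "P \<in> Cons PZ ` z_strings m"
  shows "expect (Suc m) (plus_zeros m) (pstring_mat P) = 0"
proof -
  obtain Q where Q: "P = PZ # Q" "set Q \<subseteq> {PI, PZ}" "length Q = m"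
    using assms by (auto simp: z_strings_def)
  have "diagonal_on (Suc m) (pstring_mat P)"
    using Q by (intro diagonal_on_pstring_mat_Z) auto
  then show ?thesis
    unfolding plus_zeros_def
    using Q pstring_mat_zeros[of P] pstring_mat_Z_one_zeros[of Q]
    by (simp add: expect_diagonal_two_point_state plus_zeros_support)
qed

lemma Dquant_plus_zeros:
  "Dquant (Suc m) (\<lambda>P. of_bool (P \<in> Cons PZ ` z_strings m)) (plus_zeros m) = 2 ^ m"
  by (simp add: Dquant_of_bool z_leading_strings_subset expect_plus_zeros_z_leading
      card_z_leading_strings)

lemma variance_plus_zeros:
  "variance (Suc m) (\<lambda>P. of_bool (P \<in> Cons PZ ` z_strings m)) (plus_zeros m) = (2 ^ m)\<^sup>2"
proof -
  let ?S = "Cons PZ ` z_strings m"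
  let ?H = "ham_mat (Suc m) (\<lambda>P. of_bool (P \<in> ?S))"
  have diag: "diagonal_on (Suc m) ?H"
    by (rule diagonal_on_ham_mat_Z) (auto simp: z_strings_def)
  have "?H (False # replicate m False) (False # replicate m False) = (\<Sum>Q\<in>?S. 1)"
    unfolding ham_mat_of_bool[OF z_leading_strings_subset]
    using pstring_mat_zeros[of "PZ # Q" for Q] by (intro sum.cong refl) (auto simp: z_strings_def)
  moreover have "?H (True # replicate m False) (True # replicate m False) = (\<Sum>Q\<in>?S. - 1)"
    unfolding ham_mat_of_bool[OF z_leading_strings_subset]
    by (intro sum.cong refl) (auto simp: z_strings_def dest: pstring_mat_Z_one_zeros)
  ultimately show ?thesis
    unfolding plus_zeros_def
    by (subst variance_diagonal_two_point_state[OF diag, where x = "2 ^ m" and y = "- (2 ^ m)"])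
      (simp_all add: plus_zeros_support card_z_leading_strings)
qed

theorem proposition1:
  shows "\<exists>(c :: nat \<Rightarrow> pauli list \<Rightarrow> real) (\<psi> :: nat \<Rightarrow> bool list \<Rightarrow> complex).
           (\<forall>n. is_state n (\<psi> n)) \<and>
           (\<forall>\<^sub>F n in sequentially. variance n (c n) (\<psi> n) > 0) \<and>
           (\<lambda>n. Dquant n (c n) (\<psi> n) / variance n (c n) (\<psi> n)) \<longlonglongrightarrow> 0"
proof (intro exI conjI)
  let ?c = "\<lambda>n P. of_bool (P \<in> Cons PZ ` z_strings (n - 1)) :: real"
  let ?\<psi> = "\<lambda>n. if n = 0 then (\<lambda>_. 1) else plus_zeros (n - 1)"
  show "\<forall>n. is_state n (?\<psi> n)"
  proof
    fix n show "is_state n (?\<psi> n)"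
      by (cases n) (simp add: is_state_def bitstrings_def, simp add: is_state_plus_zeros)
  qed
  show "\<forall>\<^sub>F n in sequentially. variance n (?c n) (?\<psi> n) > 0"
    by (rule eventually_sequentially_Suc [THEN iffD1]) (simp add: variance_plus_zeros)
  have ratio: "(\<lambda>n. Dquant (Suc n) (?c (Suc n)) (?\<psi> (Suc n))
                    / variance (Suc n) (?c (Suc n)) (?\<psi> (Suc n))) = (\<lambda>n. (1 / 2) ^ n)"
    by (simp add: Dquant_plus_zeros variance_plus_zeros power2_eq_square power_one_over)
  show "(\<lambda>n. Dquant n (?c n) (?\<psi> n) / variance n (?c n) (?\<psi> n)) \<longlonglongrightarrow> 0"
    by (rule LIMSEQ_imp_Suc) (subst ratio, simp add: LIMSEQ_power_zero)
qed

end
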